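(* Let $w\in P_4$ be one of the monomials $x_1x_2^{6}x_3^{6}x_4$, $x_1x_2^{2}x_3^{6}x_4^{5}$, $x_1x_2^{6}x_3^{2}x_4^{5}$, $x_1x_2^{6}x_3^{3}x_4^{4}$, $x_1^{3}x_2^{4}x_3x_4^{6}$, $x_1^{3}x_2^{4}x_3^{5}x_4^{2}$, $x_1^{3}x_2^{5}x_3^{4}x_4^{2}$, $x_1^{3}x_2^{4}x_3^{3}x_4^{4}$, $x_1^{3}x_2^{4}x_3^{4}x_4^{3}$. Then for every $1\le i\le5$ the monomial $x_i^7f_i(w)\in P_5$ is strictly inadmissible.
   Context: $P_k=\mathbb F_2[x_1,\dots,x_k]$, $\deg x_i=1$, modules over the mod-2 Steenrod algebra $\mathcal A$. For $1\le i\le5$, $f_i:P_4\to P_5$ is the algebra homomorphism with $f_i(x_u)=x_u$ for $u<i$ and $f_i(x_u)=x_{u+1}$ for $i\le u\le4$. $\mathcal A(s-1)$ is the sub-Hopf algebra generated by $Sq^r$, $0\le r<2^s$, with augmentation ideal $\mathcal A(s-1)^+$. For $x=x_1^{a_1}\cdots x_5^{a_5}$: weight vector $\omega_i(x)=\sum_j\alpha_{i-1}(a_j)$ ($\alpha_r(a)$ the $r$-th binary digit), exponent vector $\sigma(x)=(a_1,\dots,a_5)$, both ordered left-lexicographically; for monomials of equal degree, $x<y$ iff $\omega(x)<\omega(y)$, or $\omega(x)=\omega(y)$ and $\sigma(x)<\sigma(y)$. $P_5^-(\omega)$ is spanned by monomials $y$ of degree $\sum_i2^{i-1}\omega_i$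 with $\omega(y)<\omega$. A monomial $x$ is strictly inadmissible if there are monomials $y_1,\dots,y_r<x$ with $x+\sum_jy_j\in\mathcal A(s-1)^+P_5+P_5^-(\omega(x))$, where $s=\max\{i:\omega_i(x)>0\}$. *)

theory Defs
  imports Main
begin

text \<open>Monomials of P_k: exponent lists (a_1,...,a_k) of length k.
 Polynomials over F_2: finite sets of monomials (the set of monomials with coefficient 1);
 addition is symmetric difference.\<close>

type_synonym mono = "nat list"
type_synonym poly = "nat list set"

definition sdiff :: "'a set \<Rightarrow> 'a set \<Rightarrow> 'a set" where
  "sdiff p q = (p - q) \<union> (q - p)"

definition is_poly :: "nat \<Rightarrow> poly \<Rightarrow> bool" where
  "is_poly k P \<longleftrightarrow> finite P \<and> (\<forall>a\<in>P. length a = k)"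

definition deg :: "mono \<Rightarrow> nat" where
  "deg a = sum_list a"

text \<open>Sq^r on a monomial (Cartan formula with Sq^t(x^a) = binom a t x^(a+t)):
  the coefficient of x^b is prod_j binom(a_j, b_j - a_j) mod 2.\<close>
definition sq_mono :: "nat \<Rightarrow> mono \<Rightarrow> poly" where
  "sq_mono r a = {b. length b = length a \<and> (\<forall>j<length a. a ! j \<le> b ! j)
       \<and> sum_list b = sum_list a + r
       \<and> odd (\<Prod>j<length a. (a ! j) choose (b ! j - a ! j))}"

text \<open>Sq^r on a polynomial, extended F_2-linearly.\<close>
definition sq_poly :: "nat \<Rightarrow> poly \<Rightarrow> poly" where
  "sq_poly r P = {b. odd (card {a\<in>P. b \<in> sq_mono r a})}"

inductive_set f2span :: "poly set \<Rightarrow> poly set" for S where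
  zero: "{} \<in> f2span S"
| add: "p \<in> f2span S \<Longrightarrow> q \<in> S \<Longrightarrow> sdiff p q \<in> f2span S"

text \<open>A(s-1)^+ P_5: the span of all Sq^r f with 0 < r < 2^s and f in P_5.\<close>
definition hit5 :: "nat \<Rightarrow> poly set" where
  "hit5 s = f2span {sq_poly r f | r f. 0 < r \<and> r < 2 ^ s \<and> is_poly 5 f}"

text \<open>Weight vector, 0-indexed: omega a i = omega_(i+1)(x) = sum_j alpha_i(a_j).\<close>
definition omega :: "mono \<Rightarrow> nat \<Rightarrow> nat" where
  "omega a i = (\<Sum>j<length a. (a ! j div 2 ^ i) mod 2)"

definition lexless :: "(nat \<Rightarrow> nat) \<Rightarrow> (nat \<Rightarrow> nat) \<Rightarrow> bool" where
  "lexless f g \<longleftrightarrow> (\<exists>k. (\<forall>i<k. f i = g i) \<and> f k < g k)"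

definition lexless_list :: "nat list \<Rightarrow> nat list \<Rightarrow> bool" where
  "lexless_list a b \<longleftrightarrow> (\<exists>k<length a. k < length b \<and> (\<forall>i<k. a ! i = b ! i) \<and> a ! k < b ! k)"

definition mless :: "mono \<Rightarrow> mono \<Rightarrow> bool" where
  "mless x y \<longleftrightarrow> length x = 5 \<and> length y = 5 \<and> deg x = deg y \<and>
     (lexless (omega x) (omega y) \<or> (omega x = omega y \<and> lexless_list x y))"

text \<open>Degree of a weight vector: sum_i 2^(i-1) omega_i (0-indexed here).\<close>
definition wdeg :: "(nat \<Rightarrow> nat) \<Rightarrow> nat" where
  "wdeg w = (\<Sum>i\<in>{i. w i \<noteq> 0}. 2 ^ i * w i)"

definition P5minus :: "(nat \<Rightarrow> nat) \<Rightarrow> poly set" where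
  "P5minus w = {P. is_poly 5 P \<and> (\<forall>y\<in>P. deg y = wdeg w \<and> lexless (omega y) w)}"

text \<open>s = max{i : omega_i(x) > 0} (1-indexed) is Max{i : omega x i > 0} + 1 (0-indexed).\<close>
definition sval :: "mono \<Rightarrow> nat" where
  "sval x = Max {i. omega x i > 0} + 1"

definition strictly_inadmissible :: "mono \<Rightarrow> bool" where
  "strictly_inadmissible x \<longleftrightarrow>
     (\<exists>Y. finite Y \<and> (\<forall>y\<in>Y. mless y x) \<and>
        (\<exists>h\<in>hit5 (sval x). \<exists>m\<in>P5minus (omega x). sdiff {x} Y = sdiff h m))"

definition f_mono :: "nat \<Rightarrow> mono \<Rightarrow> mono" where
  "f_mono i a = take (i - 1) a @ 0 # drop (i - 1) a"

definition mmul :: "mono \<Rightarrow> mono \<Rightarrow> mono" where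
  "mmul a b = map2 (+) a b"

definition xpow :: "nat \<Rightarrow> nat \<Rightarrow> mono" where
  "xpow i e = (replicate 5 0)[i - 1 := e]"

end

theory Submission
  imports Defs
begin

text \<open>Each monomial \<open>x = x_i^7 f_i(w)\<close> has \<open>\<omega>_2(x) > 0\<close>, so \<open>s \<ge> 2\<close> and both
  \<open>Sq^1\<close> and \<open>Sq^2\<close> lie in \<open>\<A>(s-1)\<^sup>+\<close>. For every such \<open>x\<close> there are explicit
  \<open>F, G \<in> P_5\<close> (found by computer search) with \<open>Sq^1 F + Sq^2 G = x + \<Sum> y_j\<close>, all \<open>y_j < x\<close>;
  so \<open>x\<close> is strictly inadmissible without any \<open>P_5^-(\<omega>)\<close> term.\<close>

fun weak_compositions :: "nat \<Rightarrow> nat \<Rightarrow> nat list list" where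
  "weak_compositions r 0 = (if r = 0 then [[]] else [])"
| "weak_compositions r (Suc n) = [d # ds. d \<leftarrow> [0..<Suc r], ds \<leftarrow> weak_compositions (r - d) n]"

lemma set_weak_compositions:
  "set (weak_compositions r n) = {ds. length ds = n \<and> sum_list ds = r}"
proof (induction n arbitrary: r)
  case (Suc n)
  show ?case
  proof (intro set_eqI iffI)
    fix ds
    assume "ds \<in> {ds. length ds = Suc n \<and> sum_list ds = r}"
    then obtain d ds' where "ds = d # ds'" "length ds' = n" "d + sum_list ds' = r"
      by (auto simp: length_Suc_conv)
    then show "ds \<in> set (weak_compositions r (Suc n))" using Suc by force
  qed (use Suc in auto)
qed auto

lemma sum_list_map2_plus:
  fixes a d :: "'a::comm_monoid_add list"
  shows "length a = length d \<Longrightarrow> sum_list (map2 (+) a d) = sum_list a + sum_list d"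
  by (induction a d rule: list_induct2) (simp_all add: add_ac)

text \<open>Cartan formula: \<open>Sq^r(x^a) = \<Sum>\<^bsub>|d| = r\<^esub> (\<Prod>\<^sub>j a\<^sub>j choose d\<^sub>j) x^(a+d)\<close>.\<close>
definition sq_mono_list :: "nat \<Rightarrow> mono \<Rightarrow> mono list" where
  "sq_mono_list r a =
     [map2 (+) a d. d \<leftarrow> weak_compositions r (length a), odd (\<Prod>(x, e)\<leftarrow>zip a d. x choose e)]"

lemma set_sq_mono_list: "set (sq_mono_list r a) = sq_mono r a"
proof (intro set_eqI iffI)
  fix b
  have prod_nth: "(\<Prod>(x, e)\<leftarrow>zip a d. x choose e) = (\<Prod>j<length a. a ! j choose d ! j)"
    if "length d = length a" for d
    using that by (simp add: prod.list_conv_set_nth atLeast0LessThan)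
  {
    assume "b \<in> set (sq_mono_list r a)"
    then obtain d where d: "length d = length a" "sum_list d = r" "b = map2 (+) a d"
      and odd: "odd (\<Prod>(x, e)\<leftarrow>zip a d. x choose e)"
      unfolding sq_mono_list_def by (auto simp: set_weak_compositions)
    then show "b \<in> sq_mono r a"
      unfolding sq_mono_def using prod_nth[OF d(1)] by (simp add: sum_list_map2_plus)
  }
  {
    assume "b \<in> sq_mono r a"
    then have len: "length b = length a" and le: "\<forall>j<length a. a ! j \<le> b ! j"
      and deg: "sum_list b = sum_list a + r"
      and odd: "odd (\<Prod>j<length a. a ! j choose (b ! j - a ! j))"
      unfolding sq_mono_def by auto
    define d where "d = map2 (-) b a"
    have d_len: "length d = length a" using len unfolding d_def by simp
    have b_eq: "b = map2 (+) a d"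
      using len le unfolding d_def by (intro nth_equalityI) auto
    then have "sum_list d = r" using deg sum_list_map2_plus[OF d_len[symmetric]] by simp
    moreover have "odd (\<Prod>(x, e)\<leftarrow>zip a d. x choose e)"
    proof -
      have "d ! j = b ! j - a ! j" if "j < length a" for j
        using that len unfolding d_def by simp
      then show ?thesis using odd unfolding prod_nth[OF d_len] by simp
    qed
    ultimately show "b \<in> set (sq_mono_list r a)"
      unfolding sq_mono_list_def using b_eq d_len by (auto simp: set_weak_compositions)
  }
qed

definition sdiff_list :: "'a list \<Rightarrow> 'a list \<Rightarrow> 'a list" where
  "sdiff_list P Q = filter (\<lambda>b. b \<notin> set Q) P @ filter (\<lambda>b. b \<notin> set P) Q"

lemma set_sdiff_list: "set (sdiff_list P Q) = sdiff (set P) (set Q)"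
  unfolding sdiff_list_def sdiff_def by auto

lemma sq_poly_empty: "sq_poly r {} = {}"
  unfolding sq_poly_def by simp

lemma sq_poly_insert:
  assumes "finite F" and "a \<notin> F"
  shows "sq_poly r (insert a F) = sdiff (sq_mono r a) (sq_poly r F)"
proof (intro set_eqI)
  fix b
  let ?S = "{a' \<in> F. b \<in> sq_mono r a'}"
  have "{a' \<in> insert a F. b \<in> sq_mono r a'} = (if b \<in> sq_mono r a then insert a ?S else ?S)"
    by auto
  then have "card {a' \<in> insert a F. b \<in> sq_mono r a'} = (if b \<in> sq_mono r a then Suc (card ?S) else card ?S)"
    using assms by simp
  then show "b \<in> sq_poly r (insert a F) \<longleftrightarrow> b \<in> sdiff (sq_mono r a) (sq_poly r F)"
    unfolding sq_poly_def sdiff_def by auto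
qed

fun sq_poly_list :: "nat \<Rightarrow> mono list \<Rightarrow> mono list" where
  "sq_poly_list r [] = []"
| "sq_poly_list r (a # L) = sdiff_list (sq_mono_list r a) (sq_poly_list r L)"

lemma set_sq_poly_list: "distinct L \<Longrightarrow> set (sq_poly_list r L) = sq_poly r (set L)"
  by (induction L)
    (auto simp: sq_poly_empty sq_poly_insert set_sdiff_list set_sq_mono_list)

lemma lexless_list_if_lexordp:
  assumes "ord_class.lexordp xs ys" and "length xs = length ys"
  shows "lexless_list xs ys"
proof -
  obtain us a b vs ws where "a < b" "xs = us @ a # vs" "ys = us @ b # ws"
    using assms by (auto simp: lexordp_iff)
  then show ?thesis
    unfolding lexless_list_def by (intro exI[of _ "length us"]) (auto simp: nth_append)
qed

lemma lexless_if_lexless_list_upt: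
  assumes "lexless_list (map f [0..<n]) (map g [0..<n])"
  shows "lexless f g"
proof -
  obtain k where "k < n" "\<forall>i<k. f i = g i" "f k < g k"
    using assms unfolding lexless_list_def by auto
  then show ?thesis unfolding lexless_def by blast
qed

lemma omega_eq_0_if_entries_less:
  assumes "\<forall>v\<in>set a. v < 2 ^ n" and "n \<le> i"
  shows "omega a i = 0"
proof -
  have "(2::nat) ^ n \<le> 2 ^ i" using assms(2) by (rule power_increasing) simp
  then have "v div 2 ^ i = 0" if "v \<in> set a" for v
    using assms(1) that by (meson div_less order_less_le_trans)
  then show ?thesis unfolding omega_def by (simp add: nth_mem)
qed

definition weights :: "nat \<Rightarrow> mono \<Rightarrow> nat list" where
  "weights n a = map (\<lambda>i. \<Sum>v\<leftarrow>a. v div 2 ^ i mod 2) [0..<n]"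

lemma weights_eq_map_omega: "weights n a = map (omega a) [0..<n]"
  unfolding weights_def omega_def by (simp add: sum_list_sum_nth atLeast0LessThan)

lemma omega_eq_if_weights_eq:
  assumes "\<forall>v\<in>set x. v < 2 ^ n" and "\<forall>v\<in>set y. v < 2 ^ n" and "weights n x = weights n y"
  shows "omega x = omega y"
proof
  fix i
  show "omega x i = omega y i"
  proof (cases "i < n")
    case True
    then show ?thesis using assms(3) by (simp add: weights_eq_map_omega)
  next
    case False
    then show ?thesis using assms(1,2) by (simp add: omega_eq_0_if_entries_less)
  qed
qed

text \<open>Exponents below \<open>2^5\<close> have no weight beyond \<open>\<omega>\<^sub>5\<close>, so the first five weights
  determine \<open>\<omega>\<close>.\<close>
definition mless_code :: "mono \<Rightarrow> mono \<Rightarrow> bool" where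
  "mless_code y x \<longleftrightarrow> length y = 5 \<and> length x = 5 \<and> sum_list y = sum_list x \<and>
     (\<forall>v\<in>set (y @ x). v < 2 ^ 5) \<and>
     (ord_class.lexordp (weights 5 y) (weights 5 x) \<or>
      weights 5 y = weights 5 x \<and> ord_class.lexordp y x)"

lemma mless_if_mless_code:
  assumes "mless_code y x"
  shows "mless y x"
proof -
  have bounded: "\<forall>v\<in>set y. v < 2 ^ 5" "\<forall>v\<in>set x. v < 2 ^ 5"
    using assms unfolding mless_code_def by auto
  have "lexless (omega y) (omega x)" if "ord_class.lexordp (weights 5 y) (weights 5 x)"
    using that by (intro lexless_if_lexless_list_upt lexless_list_if_lexordp)
      (simp_all add: weights_eq_map_omega)
  moreover have "omega y = omega x" if "weights 5 y = weights 5 x"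
    using omega_eq_if_weights_eq[OF bounded that] .
  moreover have "lexless_list y x" if "ord_class.lexordp y x"
    using that assms unfolding mless_code_def by (simp add: lexless_list_if_lexordp)
  ultimately show ?thesis
    using assms unfolding mless_code_def mless_def deg_def by auto
qed

lemma sdiff_sq_poly_in_hit5:
  assumes "is_poly 5 F" and "is_poly 5 G" and "2 \<le> s"
  shows "sdiff (sq_poly 1 F) (sq_poly 2 G) \<in> hit5 s"
proof -
  have "(2::nat) < 2 ^ s"
    using power_strict_increasing[of 1 s "2::nat"] assms(3) by simp
  then have "sq_poly 1 F \<in> {sq_poly r f | r f. 0 < r \<and> r < 2 ^ s \<and> is_poly 5 f}"
    and "sq_poly 2 G \<in> {sq_poly r f | r f. 0 < r \<and> r < 2 ^ s \<and> is_poly 5 f}"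
    using assms(1,2) by force+
  then have "sdiff (sdiff {} (sq_poly 1 F)) (sq_poly 2 G) \<in> hit5 s"
    unfolding hit5_def by (intro f2span.intros)
  then show ?thesis by (simp add: sdiff_def)
qed

lemma less_sval_if_omega_pos:
  assumes "\<forall>v\<in>set x. v < 2 ^ n" and "0 < omega x k"
  shows "k < sval x"
proof -
  have "{i. 0 < omega x i} \<subseteq> {..<n}"
    using omega_eq_0_if_entries_less[OF assms(1)] by (force simp: not_less[symmetric])
  then have "finite {i. 0 < omega x i}" by (rule finite_subset) simp
  then show ?thesis unfolding sval_def using assms(2) by (simp add: less_Suc_eq_le)
qed

lemma strictly_inadmissible_if_leading_term:
  assumes "h \<in> hit5 (sval x)" and "finite h" and "x \<in> h" and "\<forall>y\<in>h - {x}. mless y x"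
  shows "strictly_inadmissible x"
  unfolding strictly_inadmissible_def
proof (intro exI[of _ "h - {x}"] conjI bexI)
  show "sdiff {x} (h - {x}) = sdiff h {}" using assms(3) unfolding sdiff_def by auto
  show "{} \<in> P5minus (omega x)" unfolding P5minus_def is_poly_def by simp
qed (use assms in auto)

definition hit_certificate :: "mono \<Rightarrow> mono list \<Rightarrow> mono list \<Rightarrow> bool" where
  "hit_certificate x F G \<longleftrightarrow> distinct F \<and> distinct G \<and> (\<forall>a\<in>set (F @ G). length a = 5) \<and>
     (\<forall>v\<in>set x. v < 2 ^ 5) \<and> 0 < omega x 1 \<and>
     (let h = sdiff_list (sq_poly_list 1 F) (sq_poly_list 2 G)
      in x \<in> set h \<and> (\<forall>y\<in>set h. y = x \<or> mless_code y x))"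

lemma strictly_inadmissible_if_hit_certificate:
  assumes "hit_certificate x F G"
  shows "strictly_inadmissible x"
proof -
  let ?h = "sdiff (sq_poly 1 (set F)) (sq_poly 2 (set G))"
  have cert: "distinct F" "distinct G" "\<forall>a\<in>set F \<union> set G. length a = 5"
    "\<forall>v\<in>set x. v < 2 ^ 5" "0 < omega x 1"
    using assms unfolding hit_certificate_def by simp_all
  have leading: "x \<in> ?h" "\<forall>y\<in>?h. y = x \<or> mless_code y x"
    using assms cert(1,2) unfolding hit_certificate_def Let_def
    by (simp_all add: set_sdiff_list set_sq_poly_list)
  have "1 < sval x" using less_sval_if_omega_pos cert(4,5) by blast
  then have "?h \<in> hit5 (sval x)"
    using cert(3) by (intro sdiff_sq_poly_in_hit5) (auto simp: is_poly_def)
  moreover have "finite ?h"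
    using cert(1,2) by (metis finite_set set_sdiff_list set_sq_poly_list)
  ultimately show ?thesis
    using leading mless_if_mless_code by (intro strictly_inadmissible_if_leading_term) auto
qed

definition certificates :: "(mono \<times> mono list \<times> mono list) list" where
  "certificates =
  [([7,1,6,6,1],
    [[7,1,3,5,4],[7,1,5,5,2],[7,1,5,6,1],[7,3,3,5,2],[7,3,3,6,1],[7,3,4,5,1]],
    [[7,2,3,5,2],[7,2,3,6,1]]),
   ([1,7,6,6,1],
    [[1,7,5,5,2],[1,7,5,6,1],[1,7,6,5,1]],
    [[1,7,5,5,1],[1,9,3,5,1]]),
   ([1,6,7,6,1],
    [[1,5,7,5,2],[1,5,7,6,1],[1,6,7,5,1]],
    [[1,3,9,5,1],[1,5,7,5,1]]),
   ([1,6,6,7,1],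
    [[1,5,5,7,2],[1,5,6,7,1],[1,6,5,7,1]],
    [[1,3,5,9,1],[1,5,5,7,1]]),
   ([1,6,6,1,7],
    [[1,5,5,2,7],[1,5,6,1,7],[1,6,5,1,7]],
    [[1,3,5,1,9],[1,5,5,1,7]]),
   ([7,1,2,6,5],
    [[7,1,1,5,6],[7,1,2,5,5],[7,1,4,3,5],[7,3,1,3,6],[7,3,1,4,5],[7,3,2,3,5]],
    [[7,1,2,3,6],[7,2,1,3,6],[7,2,2,3,5]]),
   ([1,7,2,6,5],
    [[1,7,1,5,6],[1,7,1,6,5],[1,7,2,5,5]],
    [[1,7,1,5,5],[1,9,1,3,5]]),
   ([1,2,7,6,5],
    [[1,1,7,5,6],[1,1,7,6,5],[1,2,7,5,5]],
    [[1,1,7,5,5],[1,1,9,3,5]]),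
   ([1,2,6,7,5],
    [[1,1,5,7,6],[1,1,6,7,5],[1,2,5,7,5]],
    [[1,1,3,9,5],[1,1,5,7,5]]),
   ([1,2,6,5,7],
    [[1,1,5,6,7],[1,1,6,5,7],[1,2,5,5,7]],
    [[1,1,3,5,9],[1,1,5,5,7]]),
   ([7,1,6,2,5],
    [[7,1,3,4,5],[7,1,5,1,6],[7,1,5,2,5],[7,3,3,1,6],[7,3,3,2,5],[7,3,4,1,5]],
    [[7,2,3,1,6],[7,2,3,2,5]]),
   ([1,7,6,2,5],
    [[1,7,5,1,6],[1,7,5,2,5],[1,7,6,1,5]],
    [[1,7,5,1,5],[1,9,3,1,5]]),
   ([1,6,7,2,5],
    [[1,5,7,1,6],[1,5,7,2,5],[1,6,7,1,5]],
    [[1,3,9,1,5],[1,5,7,1,5]]),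
   ([1,6,2,7,5],
    [[1,5,1,7,6],[1,5,2,7,5],[1,6,1,7,5]],
    [[1,3,1,9,5],[1,5,1,7,5]]),
   ([1,6,2,5,7],
    [[1,5,1,6,7],[1,5,2,5,7],[1,6,1,5,7]],
    [[1,3,1,5,9],[1,5,1,5,7]]),
   ([7,1,6,3,4],
    [[7,1,3,4,5],[7,1,3,5,4],[7,1,4,3,5],[7,1,4,5,3],[7,1,5,3,4],[7,1,5,4,3],[7,3,3,3,4],[7,3,3,4,3],[7,3,4,3,3]],
    [[7,1,6,2,3],[7,2,3,3,4],[7,2,3,4,3],[7,2,4,3,3]]),
   ([1,7,6,3,4],
    [[1,7,3,3,6],[1,7,3,4,5],[1,7,3,5,4],[1,7,3,6,3],[1,7,4,3,5],[1,7,4,5,3],[1,7,5,3,4],[1,7,5,4,3],[1,7,6,3,3],[1,10,3,3,3]],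
    [[1,7,3,3,5],[1,7,3,5,3],[1,7,5,3,3],[1,7,6,2,3],[1,9,3,3,3]]),
   ([1,6,7,3,4],
    [[1,3,7,3,6],[1,3,7,4,5],[1,3,7,5,4],[1,3,7,6,3],[1,3,10,3,3],[1,4,7,3,5],[1,4,7,5,3],[1,5,7,3,4],[1,5,7,4,3],[1,6,7,3,3]],
    [[1,3,7,3,5],[1,3,7,5,3],[1,3,9,3,3],[1,5,7,3,3],[1,6,7,2,3]]),
   ([1,6,3,7,4],
    [[1,3,3,7,6],[1,3,3,10,3],[1,3,4,7,5],[1,3,5,7,4],[1,3,6,7,3],[1,4,3,7,5],[1,4,5,7,3],[1,5,3,7,4],[1,5,4,7,3],[1,6,3,7,3]],
    [[1,3,3,7,5],[1,3,3,9,3],[1,3,5,7,3],[1,5,3,7,3],[1,6,2,7,3]]),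
   ([1,6,3,4,7],
    [[1,3,3,3,10],[1,3,3,6,7],[1,3,4,5,7],[1,3,5,4,7],[1,3,6,3,7],[1,4,3,5,7],[1,4,5,3,7],[1,5,3,4,7],[1,5,4,3,7],[1,6,3,3,7]],
    [[1,3,3,3,9],[1,3,3,5,7],[1,3,5,3,7],[1,5,3,3,7],[1,6,2,3,7]]),
   ([7,3,4,1,6],
    [[7,3,3,4,3],[7,3,4,1,5],[7,5,1,2,5],[7,5,1,4,3]],
    [[7,2,3,4,3],[7,3,1,2,6],[7,3,2,2,5],[7,3,2,4,3],[7,6,1,2,3]]),
   ([3,7,4,1,6],
    [[3,7,3,4,3],[3,7,4,1,5],[5,7,1,2,5],[5,7,1,4,3]],
    [[2,7,3,4,3],[3,7,1,2,6],[3,7,2,2,5],[3,7,2,4,3],[6,7,1,2,3]]),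
   ([3,4,7,1,6],
    [[3,3,7,4,3],[3,4,7,1,5],[5,1,7,2,5],[5,1,7,4,3]],
    [[2,3,7,4,3],[3,1,7,2,6],[3,2,7,2,5],[3,2,7,4,3],[6,1,7,2,3]]),
   ([3,4,1,7,6],
    [[3,3,4,7,3],[3,4,1,7,5],[5,1,2,7,5],[5,1,4,7,3]],
    [[2,3,4,7,3],[3,1,2,7,6],[3,2,2,7,5],[3,2,4,7,3],[6,1,2,7,3]]),
   ([3,4,1,6,7],
    [[3,3,4,3,7],[3,4,1,5,7],[5,1,2,5,7],[5,1,4,3,7]],
    [[2,3,4,3,7],[3,1,2,6,7],[3,2,2,5,7],[3,2,4,3,7],[6,1,2,3,7]]),
   ([7,3,4,5,2],
    [[7,5,1,3,4],[7,5,1,5,2]],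
    [[7,3,1,6,2],[7,3,2,3,4],[7,3,2,5,2],[7,6,1,3,2]]),
   ([3,7,4,5,2],
    [[5,7,1,3,4],[5,7,1,5,2]],
    [[3,7,1,6,2],[3,7,2,3,4],[3,7,2,5,2],[6,7,1,3,2]]),
   ([3,4,7,5,2],
    [[5,1,7,3,4],[5,1,7,5,2]],
    [[3,1,7,6,2],[3,2,7,3,4],[3,2,7,5,2],[6,1,7,3,2]]),
   ([3,4,5,7,2],
    [[5,1,3,7,4],[5,1,5,7,2]],
    [[3,1,6,7,2],[3,2,3,7,4],[3,2,5,7,2],[6,1,3,7,2]]),
   ([3,4,5,2,7],
    [[5,1,3,4,7],[5,1,5,2,7]],
    [[3,1,6,2,7],[3,2,3,4,7],[3,2,5,2,7],[6,1,3,2,7]]),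
   ([7,3,5,4,2],
    [[7,3,5,1,4],[7,5,3,1,4],[7,5,5,1,2]],
    [[7,3,3,2,4],[7,3,5,2,2],[7,3,6,1,2],[7,6,3,1,2]]),
   ([3,7,5,4,2],
    [[3,7,5,1,4],[5,7,3,1,4],[5,7,5,1,2]],
    [[3,7,3,2,4],[3,7,5,2,2],[3,7,6,1,2],[6,7,3,1,2]]),
   ([3,5,7,4,2],
    [[3,5,7,1,4],[5,3,7,1,4],[5,5,7,1,2]],
    [[3,3,7,2,4],[3,5,7,2,2],[3,6,7,1,2],[6,3,7,1,2]]),
   ([3,5,4,7,2],
    [[3,5,1,7,4],[5,3,1,7,4],[5,5,1,7,2]],
    [[3,3,2,7,4],[3,5,2,7,2],[3,6,1,7,2],[6,3,1,7,2]]),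
   ([3,5,4,2,7],
    [[3,5,1,4,7],[5,3,1,4,7],[5,5,1,2,7]],
    [[3,3,2,4,7],[3,5,2,2,7],[3,6,1,2,7],[6,3,1,2,7]]),
   ([7,3,4,3,4],
    [[7,3,3,3,4]],
    [[7,2,3,3,4]]),
   ([3,7,4,3,4],
    [[3,7,3,3,4]],
    [[2,7,3,3,4]]),
   ([3,4,7,3,4],
    [[3,3,7,3,4]],
    [[2,3,7,3,4]]),
   ([3,4,3,7,4],
    [[3,3,3,7,4]],
    [[2,3,3,7,4]]),
   ([3,4,3,4,7],
    [[3,3,3,4,7]],
    [[2,3,3,4,7]]),
   ([7,3,4,4,3],
    [[7,3,3,4,3]],
    [[7,2,3,4,3]]),
   ([3,7,4,4,3],
    [[3,7,3,4,3]],
    [[2,7,3,4,3]]),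
   ([3,4,7,4,3],
    [[3,3,7,4,3]],
    [[2,3,7,4,3]]),
   ([3,4,4,7,3],
    [[3,3,4,7,3]],
    [[2,3,4,7,3]]),
   ([3,4,4,3,7],
    [[3,3,4,3,7]],
    [[2,3,4,3,7]])]"

lemma certificates_valid: "\<forall>(x, F, G) \<in> set certificates. hit_certificate x F G"
  by code_simp

lemma certificates_cover:
  "\<forall>w \<in> {[1,6,6,1], [1,2,6,5], [1,6,2,5], [1,6,3,4], [3,4,1,6],
          [3,4,5,2], [3,5,4,2], [3,4,3,4], [3,4,4,3]}.
     \<forall>i \<in> {1..5}. mmul (xpow i 7) (f_mono i w) \<in> fst ` set certificates"
  by code_simp

lemma strictly_inadmissible_if_certified:
  assumes "x \<in> fst ` set certificates"
  shows "strictly_inadmissible x"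
proof -
  obtain F G where "(x, F, G) \<in> set certificates"
    using assms by force
  then show ?thesis
    using certificates_valid strictly_inadmissible_if_hit_certificate by fast
qed

theorem lemma4:
  fixes w :: "nat list" and i :: nat
  assumes "w \<in> {[1,6,6,1], [1,2,6,5], [1,6,2,5], [1,6,3,4], [3,4,1,6],
                 [3,4,5,2], [3,5,4,2], [3,4,3,4], [3,4,4,3]}"
    and "1 \<le> i" and "i \<le> 5"
  shows "strictly_inadmissible (mmul (xpow i 7) (f_mono i w))"
proof -
  have "i \<in> {1..5}" using assms(2,3) by simp
  with bspec[OF certificates_cover assms(1)]
  have "mmul (xpow i 7) (f_mono i w) \<in> fst ` set certificates" by (rule bspec)
  then show ?thesis by (rule strictly_inadmissible_if_certified)
qed

end
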